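(* Let $f$ be a participatory budgeting rule that satisfies Extended Justified Representation (EJR). Then for every ordinary approval-based PB instance $I=(N,\mathcal{T},B,\mathrm{cost},\mathcal{A})$ and every nonempty $T\subseteq\mathcal{T}$, \[ d_f(T)\;\ge\;\frac{\min_{t\in T}\mathrm{cost}(t)}{\max_{t\in T}\mathrm{cost}(t)}\cdot\frac{1}{2}\cdot\left(\frac{\mathrm{cost}(T)}{\max_{t\in T}\mathrm{cost}(t)}-1\right). \]
   Context: An approval-based PB instance is $I=(N,\mathcal{T},B,\mathrm{cost},\mathcal{A})$: $N$ is a set of $n$ voters, $\mathcal{T}$ a finite set of projects, $B>0$ a budget, $\mathrm{cost}:\mathcal{T}\to\mathbb{R}_{>0}$, with $\mathrm{cost}(S)=\sum_{t\in S}\mathrm{cost}(t)$, and $A_i\subseteq\mathcal{T}$ the projects approved by voter $i$. A PB rule $f$ maps each instance to $f(I)\subseteq\mathcal{T}$ with $\mathrm{cost}(f(I))\le B$. The instance is ordinary if $\mathrm{cost}(t)\cdot n\ge B$ for every project $t\in\mathcal{T}$. For $T\subseteq\mathcal{T}$, $V\subseteq N$ is $T$-cohesive if $T\subseteq\bigcap_{i\in V}A_i$ and $\mathrm{cost}(T)/B\le|V|/n$; $\mathcal{V}(T)$ is the set of all $T$-cohesive groups. $\mathrm{avg}_W(V)=\frac{1}{|V|}\sum_{i\in V}|W\cap A_i|$. The proportionality degree is $d_f(T)=\sup\{g:\ \min_{V\in\mathcal{V}(T)}\mathrm{avg}_{f(I)}(V)\ge\min(|T|,g)\}$. A rule $f$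 satisfies EJR if for every instance $I$, every $T\subseteq\mathcal{T}$ and every $T$-cohesive group $V$, there is a voter $i\in V$ with $|A_i\cap f(I)|\ge|T|$. *)

theory Defs
  imports Complex_Main "HOL-Library.Extended_Real"
begin

record ('v, 'p) pb_instance =
  voters   :: "'v set"
  projects :: "'p set"
  budget   :: real
  pcost    :: "'p \<Rightarrow> real"
  appr     :: "'v \<Rightarrow> 'p set"

definition cost_set :: "('v, 'p) pb_instance \<Rightarrow> 'p set \<Rightarrow> real" where
  "cost_set I S = (\<Sum>t\<in>S. pcost I t)"

definition valid_instance :: "('v, 'p) pb_instance \<Rightarrow> bool" where
  "valid_instance I \<longleftrightarrow>
     finite (voters I) \<and> voters I \<noteq> {} \<and>
     finite (projects I) \<and>
     budget I > 0 \<and>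
     (\<forall>t\<in>projects I. pcost I t > 0) \<and>
     (\<forall>i\<in>voters I. appr I i \<subseteq> projects I)"

definition ordinary :: "('v, 'p) pb_instance \<Rightarrow> bool" where
  "ordinary I \<longleftrightarrow> (\<forall>t\<in>projects I. pcost I t * real (card (voters I)) \<ge> budget I)"

definition pb_rule :: "(('v, 'p) pb_instance \<Rightarrow> 'p set) \<Rightarrow> bool" where
  "pb_rule f \<longleftrightarrow> (\<forall>I. valid_instance I \<longrightarrow>
       f I \<subseteq> projects I \<and> cost_set I (f I) \<le> budget I)"

definition cohesive :: "('v, 'p) pb_instance \<Rightarrow> 'p set \<Rightarrow> 'v set \<Rightarrow> bool" where
  "cohesive I T V \<longleftrightarrow> V \<subseteq> voters I \<and> V \<noteq> {} \<and>
     (\<forall>i\<in>V. T \<subseteq> appr I i) \<and>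
     cost_set I T / budget I \<le> real (card V) / real (card (voters I))"

definition avg_sat :: "('v, 'p) pb_instance \<Rightarrow> 'p set \<Rightarrow> 'v set \<Rightarrow> real" where
  "avg_sat I W V = (\<Sum>i\<in>V. real (card (W \<inter> appr I i))) / real (card V)"

definition EJR :: "(('v, 'p) pb_instance \<Rightarrow> 'p set) \<Rightarrow> bool" where
  "EJR f \<longleftrightarrow> (\<forall>I T V. valid_instance I \<longrightarrow> T \<subseteq> projects I \<longrightarrow> cohesive I T V \<longrightarrow>
       (\<exists>i\<in>V. card (appr I i \<inter> f I) \<ge> card T))"

text \<open>Proportionality degree d_f(T) (in the extended reals; the minimum over the
  finite family of T-cohesive groups is unfolded to a universal quantifier,
  with the convention min over the empty family = +infinity).\<close>
definition prop_degree ::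
    "(('v, 'p) pb_instance \<Rightarrow> 'p set) \<Rightarrow> ('v, 'p) pb_instance \<Rightarrow> 'p set \<Rightarrow> ereal" where
  "prop_degree f I T = Sup {ereal g | g. \<forall>V. cohesive I T V \<longrightarrow>
       avg_sat I (f I) V \<ge> min (real (card T)) g}"

end

theory Submission
  imports Defs
begin

text \<open>
  Let V be T-cohesive, c the maximal cost in T and y = cost(T) / c. For 1 \<le> j \<le> |T| pick
  S \<subseteq> T with |S| = j; as cost(S) \<le> j c, the voters of V with fewer than j approved winners
  would form an S-cohesive group if there were at least j c n / B \<le> j |V| / y of them, which
  EJR forbids. Summing the layers j = 1, ..., \<lfloor>y\<rfloor> of the satisfaction counts gives
  total satisfaction \<ge> |V| (\<Sum>j = 1..\<lfloor>y\<rfloor>. 1 - j / y) \<ge> |V| (y - 1) / 2.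
\<close>

lemma sum_card_atLeast_le_sum:
  fixes s :: "'a \<Rightarrow> nat"
  assumes "finite V"
  shows "(\<Sum>j\<in>{1..m}. card {i\<in>V. j \<le> s i}) \<le> (\<Sum>i\<in>V. s i)"
proof -
  have "(\<Sum>j\<in>{1..m}. card {i\<in>V. j \<le> s i})
      = (\<Sum>j\<in>{1..m}. \<Sum>i\<in>V. if j \<le> s i then 1 else 0)"
    using assms by (simp flip: sum.inter_filter)
  also have "\<dots> = (\<Sum>i\<in>V. \<Sum>j\<in>{1..m}. if j \<le> s i then 1 else 0)"
    by (rule sum.swap)
  also have "\<dots> = (\<Sum>i\<in>V. min m (s i))"
  proof (rule sum.cong)
    fix i
    have "{j\<in>{1..m}. j \<le> s i} = {1..min m (s i)}" by auto
    then show "(\<Sum>j\<in>{1..m}. if j \<le> s i then 1 else 0) = min m (s i)"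
      by (simp flip: sum.inter_filter)
  qed simp
  also have "\<dots> \<le> (\<Sum>i\<in>V. s i)"
    by (intro sum_mono) simp
  finally show ?thesis .
qed

lemma sum_one_minus_div_floor_ge:
  fixes y :: real
  assumes "y > 0"
  shows "(y - 1) / 2 \<le> (\<Sum>j\<in>{1..nat \<lfloor>y\<rfloor>}. 1 - real j / y)"
proof -
  define m where "m = nat \<lfloor>y\<rfloor>"
  have m: "real m \<le> y" "y < real m + 1"
    using assms unfolding m_def by linarith+
  have "(\<Sum>j\<in>{1..m}. real j) = real m * (real m + 1) / 2"
    using double_gauss_sum_from_Suc_0[of m, where 'a = real] by simp
  then have "(\<Sum>j\<in>{1..m}. 1 - real j / y) = real m - real m * (real m + 1) / (2 * y)"
    by (simp only: sum_subtractf flip: sum_divide_distrib) simp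
  moreover have "(y - real m) * (y - real m - 1) \<le> 0"
    using m by (intro mult_nonneg_nonpos) auto
  then have "y * y - (2 * real m + 1) * y + real m * (real m + 1) \<le> 0"
    by (simp add: algebra_simps)
  then have "(y - 1) / 2 \<le> real m - real m * (real m + 1) / (2 * y)"
    using assms by (simp add: field_simps)
  ultimately show ?thesis
    unfolding m_def by simp
qed

lemma avg_sat_nonneg: "0 \<le> avg_sat I W V"
  unfolding avg_sat_def by (intro divide_nonneg_nonneg sum_nonneg) auto

lemma prop_degree_ge_if_avg_sat_ge:
  assumes "\<And>V. cohesive I T V \<Longrightarrow> g \<le> avg_sat I (f I) V"
  shows "ereal g \<le> prop_degree f I T"
  unfolding prop_degree_def
  by (rule Sup_upper) (use assms in \<open>auto intro: min.coboundedI2\<close>)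

lemma card_filter_add_card_filter_not:
  assumes "finite A"
  shows "card {x\<in>A. P x} + card {x\<in>A. \<not> P x} = card A"
proof -
  have "card A = card ({x\<in>A. P x} \<union> {x\<in>A. \<not> P x})"
    by (rule arg_cong[where f = card]) auto
  also have "\<dots> = card {x\<in>A. P x} + card {x\<in>A. \<not> P x}"
    using assms by (intro card_Un_disjoint) auto
  finally show ?thesis by simp
qed

lemma cost_set_pos:
  assumes "valid_instance I" "S \<subseteq> projects I" "S \<noteq> {}"
  shows "cost_set I S > 0"
  using assms finite_subset unfolding valid_instance_def cost_set_def
  by (intro sum_pos) auto

lemma Max_pcost_pos:
  assumes "valid_instance I" "T \<subseteq> projects I" "T \<noteq> {}"
  shows "Max (pcost I ` T) > 0"
proof -
  have "finite T"
    using assms(1,2) finite_subset unfolding valid_instance_def by auto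
  then have "Max (pcost I ` T) \<in> pcost I ` T"
    using assms(3) by (intro Max_in) auto
  then show ?thesis
    using assms(1,2) unfolding valid_instance_def by auto
qed

lemma cost_set_le_card_mult_Max:
  assumes "valid_instance I" "T \<subseteq> projects I" "S \<subseteq> T"
  shows "cost_set I S \<le> real (card S) * Max (pcost I ` T)"
proof -
  have "finite T"
    using assms(1,2) finite_subset unfolding valid_instance_def by auto
  then show ?thesis
    unfolding cost_set_def by (intro sum_bounded_above) (use assms(3) in auto)
qed

lemma EJR_unsatisfied_share_less:
  assumes "EJR f" "valid_instance I" "S \<subseteq> projects I" "S \<noteq> {}"
    and "V \<subseteq> voters I" "\<forall>i\<in>V. S \<subseteq> appr I i"
  shows "real (card {i\<in>V. card (appr I i \<inter> f I) < card S}) / real (card (voters I))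
           < cost_set I S / budget I"
proof (rule ccontr)
  define U where "U = {i\<in>V. card (appr I i \<inter> f I) < card S}"
  assume "\<not> ?thesis"
  then have share: "cost_set I S / budget I \<le> real (card U) / real (card (voters I))"
    unfolding U_def by simp
  have "cost_set I S / budget I > 0"
    using cost_set_pos[OF assms(2-4)] assms(2) unfolding valid_instance_def by simp
  with share have "U \<noteq> {}" by auto
  with share have "cohesive I S U"
    unfolding cohesive_def U_def using assms(5,6) by auto
  then obtain i where "i \<in> U" "card S \<le> card (appr I i \<inter> f I)"
    using assms(1-3) unfolding EJR_def by blast
  then show False unfolding U_def by simp
qed

lemma EJR_cohesive_card_satisfied_ge:
  assumes "EJR f" "valid_instance I" "T \<subseteq> projects I" "cohesive I T V" "j \<in> {1..card T}"
  shows "real (card V) * (1 - real j * Max (pcost I ` T) / cost_set I T)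
           \<le> real (card {i\<in>V. j \<le> card (appr I i \<inter> f I)})"
proof -
  define n where "n = real (card (voters I))"
  define s where "s = real (card V)"
  define u where "u = real (card {i\<in>V. card (appr I i \<inter> f I) < j})"
  define B where "B = budget I"
  define C where "C = cost_set I T"
  define c where "c = Max (pcost I ` T)"
  have V: "V \<subseteq> voters I" "V \<noteq> {}" "\<forall>i\<in>V. T \<subseteq> appr I i" "C / B \<le> s / n"
    using assms(4) unfolding cohesive_def C_def B_def s_def n_def by auto
  have "finite (voters I)" "B > 0"
    using assms(2) unfolding valid_instance_def B_def by auto
  then have "finite V" "n > 0"
    using V(1,2) finite_subset unfolding n_def by (auto simp: card_gt_0_iff)
  obtain S where S: "S \<subseteq> T" "card S = j"
    using obtain_subset_with_card_n[of j T] assms(5) by auto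
  then have "S \<noteq> {}" "T \<noteq> {}"
    using assms(5) by auto
  have "C > 0" "c > 0"
    unfolding C_def c_def using cost_set_pos Max_pcost_pos assms(2,3) \<open>T \<noteq> {}\<close> by auto
  have "u / n < cost_set I S / B"
    using EJR_unsatisfied_share_less[OF assms(1,2) _ \<open>S \<noteq> {}\<close> V(1)] S V(3) assms(3)
    unfolding u_def n_def B_def by auto
  also have "\<dots> \<le> real j * c / B"
    using cost_set_le_card_mult_Max[OF assms(2,3) S(1)] S(2) \<open>B > 0\<close>
    unfolding c_def by (simp add: divide_right_mono)
  also have "\<dots> = real j * c / C * (C / B)"
    using \<open>C > 0\<close> by simp
  also have "\<dots> \<le> real j * c / C * (s / n)"
    using V(4) \<open>c > 0\<close> \<open>C > 0\<close> by (intro mult_left_mono) auto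
  also have "\<dots> = s * (real j * c / C) / n"
    by simp
  finally have "u < s * (real j * c / C)"
    using \<open>n > 0\<close> by (simp only: divide_less_cancel)
  moreover have "real (card {i\<in>V. j \<le> card (appr I i \<inter> f I)}) + u = s"
    using card_filter_add_card_filter_not[OF \<open>finite V\<close>, of "\<lambda>i. j \<le> card (appr I i \<inter> f I)"]
    unfolding u_def s_def by (simp add: not_le flip: of_nat_add)
  moreover have "s * (1 - real j * c / C) = s - s * (real j * c / C)"
    by (simp add: algebra_simps)
  ultimately show ?thesis
    unfolding C_def c_def s_def by linarith
qed

lemma EJR_cohesive_avg_sat_ge:
  assumes "EJR f" "valid_instance I" "T \<subseteq> projects I" "T \<noteq> {}" "cohesive I T V"
  shows "(cost_set I T / Max (pcost I ` T) - 1) / 2 \<le> avg_sat I (f I) V"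
proof -
  define sat where "sat i = card (appr I i \<inter> f I)" for i
  define s where "s = real (card V)"
  define C where "C = cost_set I T"
  define c where "c = Max (pcost I ` T)"
  define y where "y = C / c"
  have fin: "finite T" "finite V"
    using assms(2,3,5) finite_subset unfolding valid_instance_def cohesive_def by auto
  have "s > 0"
    using assms(5) fin(2) unfolding cohesive_def s_def by (auto simp: card_gt_0_iff)
  have "c > 0" "C > 0"
    unfolding c_def C_def using Max_pcost_pos cost_set_pos assms(2-4) by auto
  have "C \<le> real (card T) * c"
    unfolding C_def c_def using cost_set_le_card_mult_Max[OF assms(2,3)] by simp
  then have "y \<le> real (card T)"
    using \<open>c > 0\<close> unfolding y_def by (simp add: field_simps)
  then have "nat \<lfloor>y\<rfloor> \<le> card T"
    by (simp add: nat_le_iff floor_le_iff)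
  have "y > 0" unfolding y_def using \<open>C > 0\<close> \<open>c > 0\<close> by simp
  then have "s * ((y - 1) / 2) \<le> s * (\<Sum>j\<in>{1..nat \<lfloor>y\<rfloor>}. 1 - real j / y)"
    using \<open>s > 0\<close> by (intro mult_left_mono sum_one_minus_div_floor_ge) auto
  also have "\<dots> = (\<Sum>j\<in>{1..nat \<lfloor>y\<rfloor>}. s * (1 - real j * c / C))"
    unfolding y_def by (simp add: sum_distrib_left)
  also have "\<dots> \<le> (\<Sum>j\<in>{1..nat \<lfloor>y\<rfloor>}. real (card {i\<in>V. j \<le> sat i}))"
    using EJR_cohesive_card_satisfied_ge[OF assms(1-3,5)] \<open>nat \<lfloor>y\<rfloor> \<le> card T\<close>
    unfolding s_def C_def c_def sat_def by (intro sum_mono) auto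
  also have "\<dots> \<le> (\<Sum>i\<in>V. real (sat i))"
    using sum_card_atLeast_le_sum[OF fin(2), where m = "nat \<lfloor>y\<rfloor>" and s = sat]
    by (simp flip: of_nat_sum)
  also have "\<dots> = s * avg_sat I (f I) V"
    using \<open>s > 0\<close> unfolding avg_sat_def s_def sat_def by (simp add: Int_commute)
  finally show ?thesis
    using \<open>s > 0\<close> unfolding y_def C_def c_def by simp
qed

theorem theorem3:
  fixes f :: "('v, 'p) pb_instance \<Rightarrow> 'p set"
    and I :: "('v, 'p) pb_instance"
    and T :: "'p set"
  assumes "pb_rule f"
    and "EJR f"
    and "valid_instance I"
    and "ordinary I"
    and "T \<subseteq> projects I"
    and "T \<noteq> {}"
  shows "prop_degree f I T \<ge>
    ereal (Min (pcost I ` T) / Max (pcost I ` T) * (1 / 2) *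
           (cost_set I T / Max (pcost I ` T) - 1))"
proof (rule prop_degree_ge_if_avg_sat_ge)
  fix V assume "cohesive I T V"
  define r where "r = Min (pcost I ` T) / Max (pcost I ` T)"
  define x where "x = (cost_set I T / Max (pcost I ` T) - 1) / 2"
  have "finite T"
    using assms(3,5) finite_subset unfolding valid_instance_def by auto
  then have "Min (pcost I ` T) \<in> pcost I ` T"
    using assms(6) by (intro Min_in) auto
  then have "0 < Min (pcost I ` T)"
    using assms(3,5) unfolding valid_instance_def by auto
  moreover have "Min (pcost I ` T) \<le> Max (pcost I ` T)"
    using \<open>finite T\<close> assms(6) by (simp add: Min_le_iff Max_ge_iff)
  ultimately have "0 \<le> r" "r \<le> 1"
    unfolding r_def using Max_pcost_pos[OF assms(3,5,6)] by auto
  then have "r * x \<le> max 0 x"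
    by (cases "0 \<le> x") (auto intro: mult_left_le_one_le mult_nonneg_nonpos)
  also have "max 0 x \<le> avg_sat I (f I) V"
    unfolding x_def using EJR_cohesive_avg_sat_ge[OF assms(2,3,5,6) \<open>cohesive I T V\<close>] avg_sat_nonneg
    by simp
  finally show "Min (pcost I ` T) / Max (pcost I ` T) * (1 / 2) *
      (cost_set I T / Max (pcost I ` T) - 1) \<le> avg_sat I (f I) V"
    unfolding r_def x_def by (simp add: mult.assoc)
qed

end
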